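(* Let $m,k\ge1$, $N=m+k$, let $\Phi$ be a Minkowski norm on $\mathbb{R}^m$ and $\Psi$ a Minkowski norm on $\mathbb{R}^k$, with dual norms $\Phi^0,\Psi^0$. For $\varepsilon>0$ let $K(z,\sigma)=(\varepsilon^2+\Phi^0(z)^2)^2+16\,\Psi^0(\sigma)^2$ on $\mathbb{R}^N$. Then $$\Phi(\nabla_z K)^2+\frac{\Phi^0(z)^2}{4}\Psi(\nabla_\sigma K)^2=16\,\Phi^0(z)^2\,K.$$
   Context: Points of $\mathbb{R}^N=\mathbb{R}^m\times\mathbb{R}^k$ are written $(z,\sigma)$. A Minkowski norm on $\mathbb{R}^n$ is a function $M:\mathbb{R}^n\to[0,\infty)$ such that $M^2\in C^2(\mathbb{R}^n\setminus\{0\})$ is strictly convex and $M(\lambda x)=|\lambda|M(x)$ for all $x$, $\lambda\in\mathbb{R}$; its dual norm is $M^0(x)=\sup_{M(\xi)=1}\langle x,\xi\rangle$. *)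

theory Defs
  imports "HOL-Analysis.Analysis"
begin

definition C2_on :: "('a::euclidean_space \<Rightarrow> real) \<Rightarrow> 'a set \<Rightarrow> bool" where
  "C2_on f U \<longleftrightarrow>
     (\<exists>Df :: 'a \<Rightarrow> ('a \<Rightarrow>\<^sub>L real). \<exists>D2f :: 'a \<Rightarrow> ('a \<Rightarrow>\<^sub>L ('a \<Rightarrow>\<^sub>L real)).
        (\<forall>x\<in>U. (f has_derivative blinfun_apply (Df x)) (at x)) \<and>
        (\<forall>x\<in>U. (Df has_derivative blinfun_apply (D2f x)) (at x)) \<and>
        continuous_on U D2f)"

definition strictly_convex_fun :: "('a::real_vector \<Rightarrow> real) \<Rightarrow> bool" where
  "strictly_convex_fun f \<longleftrightarrow>
     (\<forall>x y t. x \<noteq> y \<longrightarrow> 0 < t \<longrightarrow> t < 1 \<longrightarrow>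
        f ((1 - t) *\<^sub>R x + t *\<^sub>R y) < (1 - t) * f x + t * f y)"

definition minkowski_norm :: "(real^'n \<Rightarrow> real) \<Rightarrow> bool" where
  "minkowski_norm M \<longleftrightarrow>
     (\<forall>x. 0 \<le> M x) \<and>
     C2_on (\<lambda>x. (M x)\<^sup>2) (UNIV - {0}) \<and>
     strictly_convex_fun (\<lambda>x. (M x)\<^sup>2) \<and>
     (\<forall>x c. M (c *\<^sub>R x) = \<bar>c\<bar> * M x)"

definition dual_norm :: "(real^'n \<Rightarrow> real) \<Rightarrow> real^'n \<Rightarrow> real" where
  "dual_norm M x = (SUP \<xi>\<in>{\<xi>. M \<xi> = 1}. x \<bullet> \<xi>)"

end

theory Submission imports Defs begin

(* The dual norm M^0 is the support function of the compact set {M = 1}. Strict convexity of M^2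
   makes the maximiser xi(x) of \<xi> \<mapsto> x \<bullet> \<xi> on this set unique for x \<noteq> 0, hence continuous in x.
   The vector 2 M^0(x) xi(x) is a subgradient of (M^0)^2 that depends continuously on x, so it is
   the gradient of (M^0)^2, and its M-norm is 2 M^0(x) because M(xi(x)) = 1. By the chain rule
   Phi(grad_z K) = 4 (eps^2 + Phi^0(z)^2) Phi^0(z) and Psi(grad_sigma K) = 32 Psi^0(sigma),
   and the identity is a polynomial identity in these quantities. *)

lemma has_derivative_continuous_subgradient:
  fixes f :: "'a::real_inner \<Rightarrow> real"
  assumes subgradient: "\<And>x y. g x \<bullet> (y - x) \<le> f y - f x" and cont: "isCont g x"
  shows "(f has_derivative (\<lambda>h. g x \<bullet> h)) (at x)"
  unfolding has_derivative_at_alt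
proof (intro conjI allI impI)
  show "bounded_linear (\<lambda>h. g x \<bullet> h)" by (rule bounded_linear_inner_right)
  fix e :: real assume "e > 0"
  then obtain d where "d > 0" and d: "\<And>y. dist y x < d \<Longrightarrow> dist (g y) (g x) < e"
    using cont unfolding continuous_at_eps_delta by blast
  show "\<exists>d>0. \<forall>y. norm (y - x) < d \<longrightarrow> norm (f y - f x - g x \<bullet> (y - x)) \<le> e * norm (y - x)"
  proof (intro exI[of _ d] conjI allI impI)
    fix y assume "norm (y - x) < d"
    then have "norm (g y - g x) \<le> e" using d by (simp add: dist_norm less_imp_le)
    then have "(g y - g x) \<bullet> (y - x) \<le> e * norm (y - x)"
      by (meson norm_cauchy_schwarz mult_right_mono norm_ge_zero order_trans)
    moreover have "g y \<bullet> (x - y) \<le> f x - f y" by (rule subgradient)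
    moreover have "g x \<bullet> (y - x) \<le> f y - f x" by (rule subgradient)
    ultimately show "norm (f y - f x - g x \<bullet> (y - x)) \<le> e * norm (y - x)"
      by (simp add: inner_diff_left inner_diff_right abs_le_iff)
  qed (fact \<open>d > 0\<close>)
qed

lemma arg_max_on_inner:
  fixes S :: "'a::real_inner set"
  assumes "compact S" and "S \<noteq> {}"
  shows arg_max_on_inner_mem: "arg_max_on (inner x) S \<in> S"
    and arg_max_on_inner_ge: "\<And>\<eta>. \<eta> \<in> S \<Longrightarrow> x \<bullet> \<eta> \<le> x \<bullet> arg_max_on (inner x) S"
proof -
  have "\<exists>\<xi>. is_arg_max (inner x) (\<lambda>\<eta>. \<eta> \<in> S) \<xi>"
    using continuous_attains_sup[OF assms continuous_on_inner[OF continuous_on_const continuous_on_id], of x]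
    by (auto simp: is_arg_max_linorder)
  then have "is_arg_max (inner x) (\<lambda>\<eta>. \<eta> \<in> S) (arg_max_on (inner x) S)"
    unfolding arg_max_on_def arg_max_def by (rule someI_ex)
  then show "arg_max_on (inner x) S \<in> S" "\<And>\<eta>. \<eta> \<in> S \<Longrightarrow> x \<bullet> \<eta> \<le> x \<bullet> arg_max_on (inner x) S"
    by (auto simp: is_arg_max_linorder)
qed

lemma SUP_inner_eq_arg_max_on:
  fixes S :: "'a::real_inner set"
  assumes "compact S" and "S \<noteq> {}"
  shows "(SUP \<eta>\<in>S. x \<bullet> \<eta>) = x \<bullet> arg_max_on (inner x) S"
  by (rule cSup_eq_maximum) (use arg_max_on_inner[OF assms] in auto)

lemma arg_max_on_inner_gap:
  fixes S :: "'a::real_inner set"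
  assumes "compact S" and "S \<noteq> {}" and "e > 0"
    and unique: "\<And>\<xi>. \<xi> \<in> S \<Longrightarrow> (\<forall>\<eta>\<in>S. x \<bullet> \<eta> \<le> x \<bullet> \<xi>) \<Longrightarrow> \<xi> = arg_max_on (inner x) S"
  obtains \<delta> where "\<delta> > 0"
    and "\<And>\<eta>. \<eta> \<in> S \<Longrightarrow> e \<le> dist \<eta> (arg_max_on (inner x) S) \<Longrightarrow>
           x \<bullet> \<eta> \<le> x \<bullet> arg_max_on (inner x) S - \<delta>"
proof -
  let ?\<xi> = "arg_max_on (inner x) S"
  define T where "T = S \<inter> {\<eta>. e \<le> dist \<eta> ?\<xi>}"
  show ?thesis
  proof (cases "T = {}")
    case True
    then show ?thesis using that[of 1] by (auto simp: T_def)
  next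
    case False
    have "compact T"
      unfolding T_def by (intro compact_Int_closed \<open>compact S\<close> closed_Collect_le continuous_intros)
    then obtain \<eta>0 where "\<eta>0 \<in> T" and \<eta>0: "\<And>\<eta>. \<eta> \<in> T \<Longrightarrow> x \<bullet> \<eta> \<le> x \<bullet> \<eta>0"
      using continuous_attains_sup[OF _ False continuous_on_inner[OF continuous_on_const continuous_on_id], of x]
      by auto
    have "\<eta>0 \<in> S" using \<open>\<eta>0 \<in> T\<close> by (simp add: T_def)
    have "x \<bullet> \<eta>0 \<noteq> x \<bullet> ?\<xi>"
    proof
      assume "x \<bullet> \<eta>0 = x \<bullet> ?\<xi>"
      then have "\<eta>0 = ?\<xi>" using unique[OF \<open>\<eta>0 \<in> S\<close>] arg_max_on_inner_ge[OF assms(1,2)] by simp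
      then show False using \<open>\<eta>0 \<in> T\<close> \<open>e > 0\<close> by (simp add: T_def)
    qed
    then have "x \<bullet> \<eta>0 < x \<bullet> ?\<xi>"
      using arg_max_on_inner_ge[OF assms(1,2), of \<eta>0 x] \<open>\<eta>0 \<in> S\<close> by simp
    then show ?thesis using that[of "x \<bullet> ?\<xi> - x \<bullet> \<eta>0"] \<eta>0 by (simp add: T_def)
  qed
qed

lemma isCont_arg_max_on_inner:
  fixes S :: "'a::real_inner set"
  assumes "compact S" and "S \<noteq> {}"
    and unique: "\<And>\<xi>. \<xi> \<in> S \<Longrightarrow> (\<forall>\<eta>\<in>S. x \<bullet> \<eta> \<le> x \<bullet> \<xi>) \<Longrightarrow> \<xi> = arg_max_on (inner x) S"
  shows "isCont (\<lambda>y. arg_max_on (inner y) S) x"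
  unfolding continuous_at_eps_delta
proof (intro allI impI)
  let ?\<xi> = "\<lambda>y. arg_max_on (inner y) S"
  fix e :: real assume "e > 0"
  obtain \<delta> where "\<delta> > 0" and gap: "\<And>\<eta>. \<eta> \<in> S \<Longrightarrow> e \<le> dist \<eta> (?\<xi> x) \<Longrightarrow> x \<bullet> \<eta> \<le> x \<bullet> ?\<xi> x - \<delta>"
    using arg_max_on_inner_gap[OF assms(1,2) \<open>e > 0\<close> unique] by blast
  obtain B where "B > 0" and B: "\<And>\<eta>. \<eta> \<in> S \<Longrightarrow> norm \<eta> \<le> B"
    using compact_imp_bounded[OF \<open>compact S\<close>] by (auto simp: bounded_pos)
  have inner_near: "\<bar>y \<bullet> \<eta> - x \<bullet> \<eta>\<bar> \<le> B * norm (y - x)" if "\<eta> \<in> S" for y \<eta>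
  proof -
    have "\<bar>y \<bullet> \<eta> - x \<bullet> \<eta>\<bar> \<le> norm (y - x) * norm \<eta>"
      by (metis Cauchy_Schwarz_ineq2 inner_diff_left)
    also have "\<dots> \<le> B * norm (y - x)" using B[OF that] by (simp add: mult.commute mult_right_mono)
    finally show ?thesis .
  qed
  show "\<exists>d>0. \<forall>y. dist y x < d \<longrightarrow> dist (?\<xi> y) (?\<xi> x) < e"
  proof (intro exI[of _ "\<delta> / (2 * B)"] conjI allI impI)
    fix y assume "dist y x < \<delta> / (2 * B)"
    then have close: "2 * (B * norm (y - x)) < \<delta>" using \<open>B > 0\<close> by (simp add: dist_norm field_simps)
    show "dist (?\<xi> y) (?\<xi> x) < e"
    proof (rule ccontr)
      assume "\<not> ?thesis"
      then have "x \<bullet> ?\<xi> y \<le> x \<bullet> ?\<xi> x - \<delta>" by (intro gap arg_max_on_inner_mem[OF assms(1,2)]) simp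
      moreover have "y \<bullet> ?\<xi> x \<le> y \<bullet> ?\<xi> y"
        by (rule arg_max_on_inner_ge[OF assms(1,2) arg_max_on_inner_mem[OF assms(1,2)]])
      moreover have "\<bar>y \<bullet> ?\<xi> x - x \<bullet> ?\<xi> x\<bar> \<le> B * norm (y - x)" "\<bar>y \<bullet> ?\<xi> y - x \<bullet> ?\<xi> y\<bar> \<le> B * norm (y - x)"
        by (intro inner_near arg_max_on_inner_mem[OF assms(1,2)])+
      ultimately show False using close by linarith
    qed
  qed (use \<open>\<delta> > 0\<close> \<open>B > 0\<close> in simp)
qed

definition dual_direction :: "(real^'n \<Rightarrow> real) \<Rightarrow> real^'n \<Rightarrow> real^'n" where
  "dual_direction M x = arg_max_on (inner x) {\<xi>. M \<xi> = 1}"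

context
  fixes M :: "real^'n \<Rightarrow> real"
  assumes minkowski: "minkowski_norm M"
begin

lemma minkowski_nonneg: "0 \<le> M x"
  using minkowski by (simp add: minkowski_norm_def)

lemma minkowski_scaleR: "M (c *\<^sub>R x) = \<bar>c\<bar> * M x"
  using minkowski by (simp add: minkowski_norm_def)

lemma minkowski_zero: "M 0 = 0"
  using minkowski_scaleR[of 0 0] by simp

lemma minkowski_strictly_convex:
  "x \<noteq> y \<Longrightarrow> 0 < t \<Longrightarrow> t < 1 \<Longrightarrow>
    (M ((1 - t) *\<^sub>R x + t *\<^sub>R y))\<^sup>2 < (1 - t) * (M x)\<^sup>2 + t * (M y)\<^sup>2"
  using minkowski by (auto simp: minkowski_norm_def strictly_convex_fun_def)

lemma minkowski_pos:
  assumes "x \<noteq> 0" shows "0 < M x"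
proof (rule ccontr)
  assume "\<not> 0 < M x"
  then have "M x = 0" using minkowski_nonneg[of x] by simp
  then show False
    using minkowski_strictly_convex[of 0 x "1/2"] assms by (simp add: minkowski_zero minkowski_scaleR)
qed

lemma convex_on_minkowski_sq: "convex_on UNIV (\<lambda>x. (M x)\<^sup>2)"
  unfolding convex_on_def
proof (intro conjI ballI allI impI)
  fix x y :: "real^'n" and u v :: real
  assume uv: "0 \<le> u" "0 \<le> v" "u + v = 1"
  show "(M (u *\<^sub>R x + v *\<^sub>R y))\<^sup>2 \<le> u * (M x)\<^sup>2 + v * (M y)\<^sup>2"
  proof (cases "x = y \<or> u = 0 \<or> v = 0")
    case True
    then show ?thesis using uv by (auto simp: scaleR_add_left[symmetric] distrib_right[symmetric])
  next
    case False
    then have "u = 1 - v" "0 < v" "v < 1" using uv by auto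
    then show ?thesis using False minkowski_strictly_convex[of x y v] by simp
  qed
qed simp

lemma continuous_on_minkowski: "continuous_on UNIV M"
proof -
  have "continuous_on UNIV (\<lambda>x. sqrt ((M x)\<^sup>2))"
    by (intro continuous_on_real_sqrt convex_on_continuous[OF open_UNIV convex_on_minkowski_sq])
  then show ?thesis by (simp add: minkowski_nonneg)
qed

lemma minkowski_ge_norm: "\<exists>c>0. \<forall>x. c * norm x \<le> M x"
proof -
  have "sphere (0::real^'n) 1 \<noteq> {}"
    using vector_choose_size[of 1] by auto
  then obtain x0 :: "real^'n" where "x0 \<in> sphere 0 1" and x0: "\<And>y. y \<in> sphere 0 1 \<Longrightarrow> M x0 \<le> M y"
    using continuous_attains_inf[OF compact_sphere _ continuous_on_subset[OF continuous_on_minkowski]]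
    by blast
  have "M x0 * norm x \<le> M x" for x
  proof (cases "x = 0")
    case False
    then have "M x0 \<le> M ((1 / norm x) *\<^sub>R x)" by (intro x0) simp
    then show ?thesis using False by (simp add: minkowski_scaleR field_simps)
  qed (simp add: minkowski_zero)
  moreover have "0 < M x0" using \<open>x0 \<in> sphere 0 1\<close> by (intro minkowski_pos) auto
  ultimately show ?thesis by blast
qed

lemma compact_minkowski_sphere: "compact {\<xi>. M \<xi> = 1}"
proof -
  obtain c where "c > 0" and c: "\<And>x. c * norm x \<le> M x" using minkowski_ge_norm by blast
  have "norm \<xi> \<le> 1 / c" if "M \<xi> = 1" for \<xi>
    using c[of \<xi>] \<open>c > 0\<close> that by (simp add: field_simps)
  then have "bounded {\<xi>. M \<xi> = 1}"
    unfolding bounded_iff by blast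
  moreover have "closed {\<xi>. M \<xi> = 1}"
    by (rule closed_Collect_eq[OF continuous_on_minkowski continuous_on_const])
  ultimately show ?thesis by (simp add: compact_eq_bounded_closed)
qed

lemma minkowski_normalize: "x \<noteq> 0 \<Longrightarrow> M ((1 / M x) *\<^sub>R x) = 1"
  using minkowski_pos[of x] by (simp add: minkowski_scaleR)

lemma minkowski_sphere_nonempty: "{\<xi>. M \<xi> = 1} \<noteq> {}"
  using minkowski_normalize[of "axis undefined 1"] by auto

lemma dual_direction_mem: "M (dual_direction M x) = 1"
  using arg_max_on_inner_mem[OF compact_minkowski_sphere minkowski_sphere_nonempty]
  by (simp add: dual_direction_def)

lemma dual_norm_eq_inner_dual_direction: "dual_norm M x = x \<bullet> dual_direction M x"
  unfolding dual_norm_def dual_direction_def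
  by (rule SUP_inner_eq_arg_max_on[OF compact_minkowski_sphere minkowski_sphere_nonempty])

lemma inner_le_dual_norm: "M \<eta> = 1 \<Longrightarrow> x \<bullet> \<eta> \<le> dual_norm M x"
  using arg_max_on_inner_ge[OF compact_minkowski_sphere minkowski_sphere_nonempty]
  by (simp add: dual_norm_eq_inner_dual_direction dual_direction_def)

lemma dual_norm_zero: "dual_norm M 0 = 0"
  by (simp add: dual_norm_eq_inner_dual_direction)

lemma dual_norm_pos:
  assumes "x \<noteq> 0" shows "0 < dual_norm M x"
proof -
  have "0 < x \<bullet> ((1 / M x) *\<^sub>R x)" using assms minkowski_pos[OF assms] by simp
  also have "\<dots> \<le> dual_norm M x" by (rule inner_le_dual_norm[OF minkowski_normalize[OF assms]])
  finally show ?thesis .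
qed

lemma dual_norm_nonneg: "0 \<le> dual_norm M x"
  using dual_norm_pos[of x] by (cases "x = 0") (auto simp: dual_norm_zero)

lemma dual_direction_unique:
  assumes "x \<noteq> 0" and "M \<xi> = 1" and maximal: "\<forall>\<eta>. M \<eta> = 1 \<longrightarrow> x \<bullet> \<eta> \<le> x \<bullet> \<xi>"
  shows "\<xi> = dual_direction M x"
proof (rule ccontr)
  let ?\<zeta> = "dual_direction M x"
  assume "\<xi> \<noteq> ?\<zeta>"
  \<comment> \<open>The midpoint of two maximisers is again a maximiser, but strict convexity puts it strictly
    inside the unit ball, so rescaling it onto the unit sphere would beat the maximum.\<close>
  define m where "m = (1 - 1/2) *\<^sub>R \<xi> + (1/2::real) *\<^sub>R ?\<zeta>"
  have "(M m)\<^sup>2 < 1"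
    using minkowski_strictly_convex[OF \<open>\<xi> \<noteq> ?\<zeta>\<close>, of "1/2"] assms(2) dual_direction_mem
    by (simp add: m_def)
  then have "M m < 1" using minkowski_nonneg[of m] by (simp add: power_less_one_iff abs_square_less_1)
  have "x \<bullet> \<xi> = dual_norm M x"
    using maximal inner_le_dual_norm[OF assms(2)] dual_direction_mem
    by (simp add: dual_norm_eq_inner_dual_direction eq_iff)
  then have xm: "x \<bullet> m = dual_norm M x"
    by (simp add: m_def inner_add_right dual_norm_eq_inner_dual_direction algebra_simps)
  then have "m \<noteq> 0" using dual_norm_pos[OF assms(1)] by auto
  have "dual_norm M x / M m = x \<bullet> ((1 / M m) *\<^sub>R m)" using xm by simp
  also have "\<dots> \<le> dual_norm M x" by (rule inner_le_dual_norm[OF minkowski_normalize[OF \<open>m \<noteq> 0\<close>]])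
  finally show False
    using \<open>M m < 1\<close> minkowski_pos[OF \<open>m \<noteq> 0\<close>] dual_norm_pos[OF assms(1)] by (simp add: divide_le_eq)
qed

lemma isCont_dual_direction:
  assumes "x \<noteq> 0" shows "isCont (dual_direction M) x"
proof -
  have "\<xi> = arg_max_on (inner x) {\<xi>. M \<xi> = 1}"
    if "\<xi> \<in> {\<xi>. M \<xi> = 1}" "\<forall>\<eta>\<in>{\<xi>. M \<xi> = 1}. x \<bullet> \<eta> \<le> x \<bullet> \<xi>" for \<xi>
    using dual_direction_unique[OF assms, of \<xi>] that by (simp add: dual_direction_def)
  then show ?thesis
    unfolding dual_direction_def[abs_def]
    by (rule isCont_arg_max_on_inner[OF compact_minkowski_sphere minkowski_sphere_nonempty])
qed

lemma dual_norm_sq_subgradient: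
  "((2 * dual_norm M x) *\<^sub>R dual_direction M x) \<bullet> (y - x) \<le> (dual_norm M y)\<^sup>2 - (dual_norm M x)\<^sup>2"
proof -
  have "dual_norm M x * (y \<bullet> dual_direction M x) \<le> dual_norm M x * dual_norm M y"
    by (intro mult_left_mono inner_le_dual_norm dual_direction_mem dual_norm_nonneg)
  moreover have "0 \<le> (dual_norm M y - dual_norm M x)\<^sup>2" by simp
  ultimately show ?thesis
    by (simp add: dual_norm_eq_inner_dual_direction[of x] inner_diff_right inner_commute
        power2_eq_square algebra_simps)
qed

lemma isCont_dual_norm_sq_gradient: "isCont (\<lambda>y. (2 * dual_norm M y) *\<^sub>R dual_direction M y) x"
proof (cases "x = 0")
  case False
  then show ?thesis
    unfolding dual_norm_eq_inner_dual_direction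
    by (intro continuous_intros isCont_dual_direction)
next
  case True
  obtain B where B: "\<And>y. norm (dual_direction M y) \<le> B"
    using compact_imp_bounded[OF compact_minkowski_sphere] dual_direction_mem
    by (auto simp: bounded_iff)
  have "0 \<le> B" using order_trans[OF norm_ge_zero B] .
  have "norm ((2 * dual_norm M y) *\<^sub>R dual_direction M y) \<le> 2 * B\<^sup>2 * norm y" for y
  proof -
    have "dual_norm M y = y \<bullet> dual_direction M y" by (rule dual_norm_eq_inner_dual_direction)
    also have "\<dots> \<le> norm y * norm (dual_direction M y)" by (rule norm_cauchy_schwarz)
    also have "\<dots> \<le> norm y * B" by (intro mult_left_mono B norm_ge_zero)
    finally have "dual_norm M y \<le> norm y * B" .
    have "norm ((2 * dual_norm M y) *\<^sub>R dual_direction M y) = 2 * dual_norm M y * norm (dual_direction M y)"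
      by (simp add: dual_norm_nonneg)
    also have "\<dots> \<le> 2 * (norm y * B) * B"
      by (intro mult_mono mult_left_mono B \<open>dual_norm M y \<le> norm y * B\<close>) (simp_all add: dual_norm_nonneg \<open>0 \<le> B\<close>)
    also have "\<dots> = 2 * B\<^sup>2 * norm y" by (simp add: power2_eq_square mult_ac)
    finally show ?thesis .
  qed
  then have "\<forall>\<^sub>F y in at 0. norm ((2 * dual_norm M y) *\<^sub>R dual_direction M y) \<le> 2 * B\<^sup>2 * norm y"
    by (intro always_eventually allI)
  moreover have "((\<lambda>y. 2 * B\<^sup>2 * norm y) \<longlongrightarrow> 0) (at (0::real^'n))"
    using tendsto_mult_left[OF tendsto_norm_zero[OF tendsto_ident_at[of 0 UNIV]], of "2 * B\<^sup>2"] by simp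
  ultimately have "((\<lambda>y. (2 * dual_norm M y) *\<^sub>R dual_direction M y) \<longlongrightarrow> 0) (at 0)"
    by (rule Lim_null_comparison)
  then show ?thesis using True by (simp add: isCont_def dual_norm_zero)
qed

lemma dual_norm_sq_has_gradient:
  obtains g where "((\<lambda>y. (dual_norm M y)\<^sup>2) has_derivative (\<lambda>h. g \<bullet> h)) (at x)"
    and "M g = 2 * dual_norm M x"
proof
  show "((\<lambda>y. (dual_norm M y)\<^sup>2) has_derivative
      (\<lambda>h. ((2 * dual_norm M x) *\<^sub>R dual_direction M x) \<bullet> h)) (at x)"
    by (intro has_derivative_continuous_subgradient dual_norm_sq_subgradient
        isCont_dual_norm_sq_gradient)
  show "M ((2 * dual_norm M x) *\<^sub>R dual_direction M x) = 2 * dual_norm M x"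
    by (simp add: minkowski_scaleR dual_direction_mem dual_norm_nonneg)
qed

end

theorem lemma2p5:
  fixes \<Phi> :: "real^'m \<Rightarrow> real" and \<Psi> :: "real^'k \<Rightarrow> real"
    and \<epsilon> :: real and z :: "real^'m" and \<sigma> :: "real^'k"
    and K :: "real^'m \<Rightarrow> real^'k \<Rightarrow> real"
  assumes "minkowski_norm \<Phi>" and "minkowski_norm \<Psi>" and "\<epsilon> > 0"
    and K_def: "\<And>w s. K w s = (\<epsilon>\<^sup>2 + (dual_norm \<Phi> w)\<^sup>2)\<^sup>2 + 16 * (dual_norm \<Psi> s)\<^sup>2"
  shows "\<exists>gz gs. ((\<lambda>w. K w \<sigma>) has_derivative (\<lambda>h. gz \<bullet> h)) (at z) \<and>
                ((\<lambda>s. K z s) has_derivative (\<lambda>h. gs \<bullet> h)) (at \<sigma>) \<and>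
                (\<Phi> gz)\<^sup>2 + (dual_norm \<Phi> z)\<^sup>2 / 4 * (\<Psi> gs)\<^sup>2
                  = 16 * (dual_norm \<Phi> z)\<^sup>2 * K z \<sigma>"
proof -
  define a where "a = dual_norm \<Phi> z"
  define b where "b = dual_norm \<Psi> \<sigma>"
  obtain g\<Phi> where g\<Phi>: "((\<lambda>w. (dual_norm \<Phi> w)\<^sup>2) has_derivative (\<lambda>h. g\<Phi> \<bullet> h)) (at z)"
    and "\<Phi> g\<Phi> = 2 * a"
    using dual_norm_sq_has_gradient[OF assms(1)] unfolding a_def by blast
  obtain g\<Psi> where g\<Psi>: "((\<lambda>s. (dual_norm \<Psi> s)\<^sup>2) has_derivative (\<lambda>h. g\<Psi> \<bullet> h)) (at \<sigma>)"
    and "\<Psi> g\<Psi> = 2 * b"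
    using dual_norm_sq_has_gradient[OF assms(2)] unfolding b_def by blast
  let ?gz = "(2 * (\<epsilon>\<^sup>2 + a\<^sup>2)) *\<^sub>R g\<Phi>" and ?gs = "16 *\<^sub>R g\<Psi>"
  have "((\<lambda>w. \<epsilon>\<^sup>2 + (dual_norm \<Phi> w)\<^sup>2) has_derivative (\<lambda>h. g\<Phi> \<bullet> h)) (at z)"
    using has_derivative_add[OF has_derivative_const g\<Phi>] by simp
  from has_derivative_add[OF has_derivative_power[OF this, of 2] has_derivative_const]
  have "((\<lambda>w. K w \<sigma>) has_derivative (\<lambda>h. ?gz \<bullet> h)) (at z)"
    by (simp add: K_def a_def algebra_simps)
  moreover have "((\<lambda>s. K z s) has_derivative (\<lambda>h. ?gs \<bullet> h)) (at \<sigma>)"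
    using has_derivative_add[OF has_derivative_const has_derivative_mult_right[OF g\<Psi>, of 16]]
    by (simp add: K_def)
  moreover have "\<Phi> ?gz = 4 * (\<epsilon>\<^sup>2 + a\<^sup>2) * a" and "\<Psi> ?gs = 32 * b"
    using \<open>\<Phi> g\<Phi> = 2 * a\<close> \<open>\<Psi> g\<Psi> = 2 * b\<close>
    by (simp_all add: minkowski_scaleR[OF assms(1)] minkowski_scaleR[OF assms(2)])
  moreover have "K z \<sigma> = (\<epsilon>\<^sup>2 + a\<^sup>2)\<^sup>2 + 16 * b\<^sup>2" by (simp add: K_def a_def b_def)
  ultimately show ?thesis
    unfolding a_def[symmetric] by (intro exI[of _ ?gz] exI[of _ ?gs]) (simp add: power2_eq_square algebra_simps)
qed

end
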